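(* Let $a_1,\dots,a_n\in S^d$. Algorithm 2.9 (described in the context) solves the spherical feasibility problem. That is, it terminates either in step 2 with a point $x^k/\|x^k\|$ satisfying $a_i^Tx^k\ge0$ for all $i$, or in step 3 with a positively spanning subset of $\{a_1,\dots,a_n\}$. Moreover, whenever $Q_{k+1}$ is produced from $Q_k$, $$\mathrm{def}\,Q_{k+1}\le\sqrt{\frac{1-v^2}{1+(\mathrm{def}\,Q_k)^2+2\,\mathrm{def}\,Q_k\,v}}\;\mathrm{def}\,Q_k,\qquad v=v(x^k/\|x^k\|).$$
   Context: $S^d$ is the unit sphere in $\mathbb{R}^{d+1}$ and $O$ is the origin. For $x\in S^d$, the violation is $v(x)=\max\{0,\max_i(-a_i^Tx)\}$. An index $m$ is a most violated constraint for $x$ if $a_m^Tx=\min_j a_j^Tx$. A finite set $Q$ is positively spanning if it is affinely independent and $O\in\mathrm{conv}\,Q$. It is nearly positively spanning if it is affinely independent and the orthogonal projection $O'$ of $O$ onto $\mathrm{aff}\,Q$ lies in $\mathrm{conv}\,Q$; then $\mathrm{def}\,Q=\|O'\|$. The touching sphere of an affinely independent $Q$ is the unique sphere $\{z:\|z-C\|=R\}$ with $C\in\mathrm{aff}\,Q$ containing $Q$. Algorithm 2.9: (1) Choose any $j$ and set $k=1$, $x^1=a_j$, $Q_1=\{a_j\}$. (2) If $x^k/\|x^k\|$ is feasible, stop. Otherwise let $m$ be the index of a most violated constraint for $x^k/\|x^k\|$, and let $y$ be the point on the line through $x^k$ and $a_m$ closest to the origin. (3) If $Q_k\cup\{a_m\}$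 is positively spanning, stop. (4) Compute the center $C$ of the touching sphere of $Q_k\cup\{a_m\}$. (5) If $C\in\mathrm{conv}(Q_k\cup\{a_m\})$, set $x^{k+1}=C$, $Q_{k+1}=Q_k\cup\{a_m\}$ and $k:=k+1$, then go to (2). (6) Otherwise, let $y$ be the point where the segment $\overline{yC}$ meets the relative boundary of $\mathrm{conv}(Q_k\cup\{a_m\})$. Let $F$ be a facet containing $y$, and let $a_j$ be the vertex of $Q_k$ not in $F$. Set $Q_k:=Q_k\setminus\{a_j\}$ and go to (4). *)

theory Defs
  imports "HOL-Analysis.Analysis"
begin

text \<open>Constraints are given by a :: nat => 'a with indices i < n
  (the paper's a_1,...,a_n). The ambient space 'a plays the role of R^(d+1).\<close>

definition feasible_pt :: "(nat \<Rightarrow> 'a::euclidean_space) \<Rightarrow> nat \<Rightarrow> 'a \<Rightarrow> bool" where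
  "feasible_pt a n z \<longleftrightarrow> (\<forall>i<n. 0 \<le> a i \<bullet> z)"

definition violation :: "(nat \<Rightarrow> 'a::euclidean_space) \<Rightarrow> nat \<Rightarrow> 'a \<Rightarrow> real" where
  "violation a n z = max 0 (Max ((\<lambda>i. - (a i \<bullet> z)) ` {..<n}))"

definition most_violated :: "(nat \<Rightarrow> 'a::euclidean_space) \<Rightarrow> nat \<Rightarrow> 'a \<Rightarrow> nat \<Rightarrow> bool" where
  "most_violated a n z m \<longleftrightarrow> m < n \<and> a m \<bullet> z = Min ((\<lambda>j. a j \<bullet> z) ` {..<n})"

definition pos_spanning :: "'a::euclidean_space set \<Rightarrow> bool" where
  "pos_spanning Q \<longleftrightarrow> finite Q \<and> \<not> affine_dependent Q \<and> 0 \<in> convex hull Q"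

definition proj_origin :: "'a::euclidean_space set \<Rightarrow> 'a" where
  "proj_origin Q = closest_point (affine hull Q) 0"

definition nearly_pos_spanning :: "'a::euclidean_space set \<Rightarrow> bool" where
  "nearly_pos_spanning Q \<longleftrightarrow> finite Q \<and> \<not> affine_dependent Q \<and> proj_origin Q \<in> convex hull Q"

definition defect :: "'a::euclidean_space set \<Rightarrow> real" where
  "defect Q = norm (proj_origin Q)"

definition touching_center :: "'a::euclidean_space set \<Rightarrow> 'a" where
  "touching_center Q = (THE C. C \<in> affine hull Q \<and> (\<exists>R. \<forall>q\<in>Q. dist q C = R))"

text \<open>States of Algorithm 2.9.
  At2 x Q: at step (2) with current x^k = x and Q_k = Q.
  At4 x Q P am y: in the loop of steps (4)-(6) of the iteration started at At2 x Q,
    with current (possibly reduced) set P, chosen constraint am and current point y.\<close>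
datatype 'a alg_state =
    At2 'a "'a set"
  | At4 'a "'a set" "'a set" 'a 'a
  | StopFeasible 'a
  | StopSpanning "'a set"

inductive alg_step :: "(nat \<Rightarrow> 'a::euclidean_space) \<Rightarrow> nat \<Rightarrow> 'a alg_state \<Rightarrow> 'a alg_state \<Rightarrow> bool"
  for a :: "nat \<Rightarrow> 'a" and n :: nat where
  step2_stop:
    "feasible_pt a n (x /\<^sub>R norm x) \<Longrightarrow>
     alg_step a n (At2 x Q) (StopFeasible (x /\<^sub>R norm x))"
| step3_stop:
    "\<not> feasible_pt a n (x /\<^sub>R norm x) \<Longrightarrow> most_violated a n (x /\<^sub>R norm x) m \<Longrightarrow>
     pos_spanning (insert (a m) Q) \<Longrightarrow>
     alg_step a n (At2 x Q) (StopSpanning (insert (a m) Q))"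
| step3_continue:
    "\<not> feasible_pt a n (x /\<^sub>R norm x) \<Longrightarrow> most_violated a n (x /\<^sub>R norm x) m \<Longrightarrow>
     \<not> pos_spanning (insert (a m) Q) \<Longrightarrow>
     y = closest_point (affine hull {x, a m}) 0 \<Longrightarrow>
     alg_step a n (At2 x Q) (At4 x Q Q (a m) y)"
| step5:
    "finite P \<Longrightarrow> \<not> affine_dependent (insert am P) \<Longrightarrow>
     C = touching_center (insert am P) \<Longrightarrow> C \<in> convex hull (insert am P) \<Longrightarrow>
     alg_step a n (At4 x Q P am y) (At2 C (insert am P))"
| step6:
    "finite P \<Longrightarrow> \<not> affine_dependent (insert am P) \<Longrightarrow>
     C = touching_center (insert am P) \<Longrightarrow> C \<notin> convex hull (insert am P) \<Longrightarrow>
     y' \<in> closed_segment y C \<Longrightarrow> y' \<in> rel_frontier (convex hull (insert am P)) \<Longrightarrow>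
     F facet_of (convex hull (insert am P)) \<Longrightarrow> y' \<in> F \<Longrightarrow>
     aj \<in> P \<Longrightarrow> aj \<notin> F \<Longrightarrow>
     alg_step a n (At4 x Q P am y) (At4 x Q (P - {aj}) am y')"

definition alg_init :: "(nat \<Rightarrow> 'a::euclidean_space) \<Rightarrow> nat \<Rightarrow> 'a alg_state \<Rightarrow> bool" where
  "alg_init a n s \<longleftrightarrow> (\<exists>j<n. s = At2 (a j) {a j})"

definition alg_reachable :: "(nat \<Rightarrow> 'a::euclidean_space) \<Rightarrow> nat \<Rightarrow> 'a alg_state \<Rightarrow> bool" where
  "alg_reachable a n s \<longleftrightarrow> (\<exists>s0. alg_init a n s0 \<and> (alg_step a n)\<^sup>*\<^sup>* s0 s)"

end

theory Submission
  imports Defs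
begin

(* Along every run, each state at step (2) satisfies x^k = O'(Q_k) \<noteq> 0 with Q_k nearly
  positively spanning. Because all a_i lie on the unit sphere, the touching centre of any
  subset is the projection O' of the origin onto its affine hull. The point y of step (2) is
  the projection of the origin onto the line through x^k and a_m, and its norm is exactly
  sqrt ((1 - v^2) / (1 + d^2 + 2 d v)) d with d = |x^k|; this is < d as v > 0.
  The loop (4)-(6) only moves y towards the centre C, and |C| \<le> |y|, so |y| never grows and
  def Q_(k+1) = |C| \<le> |y| gives the estimate. The vertex dropped in step (6) is never a_m:
  the facet opposite a_m lies in conv Q_k, where all points have norm \<ge> |x^k| > |y|.
  For termination, |x^k| decreases strictly through the finitely many values |O'(R)| with
  R \<subseteq> {a_1, ..., a_n}, and in between the inner loop shrinks the current set. *)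

section \<open>Projection of the origin onto an affine hull\<close>

lemma closest_point_affine_hull_orthogonal:
  fixes S :: "'a::euclidean_space set"
  assumes "z \<in> affine hull S"
  shows "(x - closest_point (affine hull S) x) \<bullet> (z - closest_point (affine hull S) x) = 0"
proof -
  let ?p = "closest_point (affine hull S) x"
  have "?p \<in> affine hull S"
    using assms closest_point_in_set[OF closed_affine_hull] by blast
  then have "2 *\<^sub>R ?p + (-1) *\<^sub>R z \<in> affine hull S"
    using mem_affine[OF affine_affine_hull _ assms, of ?p 2 "-1"] by simp
  then have "(x - ?p) \<bullet> ((2 *\<^sub>R ?p + (-1) *\<^sub>R z) - ?p) \<le> 0"
    by (rule closest_point_dot[OF convex_affine_hull closed_affine_hull])
  moreover have "(x - ?p) \<bullet> (z - ?p) \<le> 0"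
    by (rule closest_point_dot[OF convex_affine_hull closed_affine_hull assms])
  moreover have "(2 *\<^sub>R ?p + (-1) *\<^sub>R z) - ?p = - (z - ?p)"
    by (simp add: algebra_simps scaleR_2)
  ultimately show ?thesis
    by (metis inner_minus_right neg_le_0_iff_le order_antisym)
qed

lemma proj_origin_in_affine_hull: "S \<noteq> {} \<Longrightarrow> proj_origin S \<in> affine hull S"
  unfolding proj_origin_def by (simp add: closest_point_in_set)

lemma norm_proj_origin_le: "z \<in> affine hull S \<Longrightarrow> norm (proj_origin S) \<le> norm z"
  unfolding proj_origin_def using closest_point_le[OF closed_affine_hull, of z S 0] by simp

lemma inner_proj_origin:
  "z \<in> affine hull S \<Longrightarrow> z \<bullet> proj_origin S = proj_origin S \<bullet> proj_origin S"
  using closest_point_affine_hull_orthogonal[of z S 0]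
  by (simp add: proj_origin_def inner_diff_right inner_commute)

lemma inner_proj_origin_nonneg: "z \<in> affine hull S \<Longrightarrow> 0 \<le> z \<bullet> proj_origin S"
  by (metis inner_proj_origin inner_ge_zero)

lemma inner_eq_on_affine_hull:
  assumes "\<forall>q\<in>S. q \<bullet> w = c" "z \<in> affine hull S"
  shows "z \<bullet> w = c"
proof -
  have "affine hull S \<subseteq> {z. w \<bullet> z = c}"
    using assms(1) by (intro hull_minimal affine_hyperplane) (auto simp: inner_commute)
  then show ?thesis using assms(2) by (auto simp: inner_commute)
qed

lemma inner_eq_norm_dist:
  fixes q C :: "'a::real_inner"
  assumes "norm q = r" "dist q C = R"
  shows "q \<bullet> C = (r\<^sup>2 + C \<bullet> C - R\<^sup>2) / 2"
proof -
  have "R\<^sup>2 = (q - C) \<bullet> (q - C)"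
    using assms(2) by (metis dist_norm power2_norm_eq_inner)
  also have "\<dots> = q \<bullet> q - 2 * (q \<bullet> C) + C \<bullet> C"
    by (simp add: algebra_simps inner_commute)
  finally show ?thesis
    using assms(1) by (simp flip: power2_norm_eq_inner)
qed

lemma touching_center_eq_proj_origin:
  fixes S :: "'a::euclidean_space set"
  assumes "S \<noteq> {}" "\<forall>q\<in>S. norm q = r"
  shows "touching_center S = proj_origin S"
  unfolding touching_center_def
proof (rule the_equality)
  let ?p = "proj_origin S"
  have "dist q ?p = sqrt (r\<^sup>2 - ?p \<bullet> ?p)" if "q \<in> S" for q
  proof -
    have "(dist q ?p)\<^sup>2 = q \<bullet> q - 2 * (q \<bullet> ?p) + ?p \<bullet> ?p"
      by (simp add: dist_norm power2_norm_eq_inner algebra_simps inner_commute)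
    also have "\<dots> = r\<^sup>2 - ?p \<bullet> ?p"
      using that assms(2) inner_proj_origin[OF hull_inc[OF that]]
      by (simp flip: power2_norm_eq_inner)
    finally show ?thesis by (simp add: real_sqrt_unique)
  qed
  then show "?p \<in> affine hull S \<and> (\<exists>R. \<forall>q\<in>S. dist q ?p = R)"
    using proj_origin_in_affine_hull[OF assms(1)] by blast
next
  fix C assume C: "C \<in> affine hull S \<and> (\<exists>R. \<forall>q\<in>S. dist q C = R)"
  then obtain R where R: "\<forall>q\<in>S. dist q C = R" by blast
  let ?p = "proj_origin S"
  define c where "c = (r\<^sup>2 + C \<bullet> C - R\<^sup>2) / 2"
  have "\<forall>q\<in>S. q \<bullet> C = c"
    unfolding c_def using assms(2) R inner_eq_norm_dist by blast
  then have "z \<bullet> C = c" if "z \<in> affine hull S" for z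
    using that by (rule inner_eq_on_affine_hull)
  then have "C \<bullet> C = c" "?p \<bullet> C = c"
    using C proj_origin_in_affine_hull[OF assms(1)] by simp_all
  moreover have "C \<bullet> ?p = ?p \<bullet> ?p"
    using C inner_proj_origin by blast
  ultimately have "(C - ?p) \<bullet> (C - ?p) = 0"
    by (simp add: algebra_simps inner_commute)
  then show "C = ?p" by simp
qed

lemma proj_origin_pair:
  fixes x b :: "'a::euclidean_space"
  assumes "x \<noteq> b"
  defines "t \<equiv> (x \<bullet> (x - b)) / (norm (x - b))\<^sup>2"
  shows "proj_origin {x, b} = x + t *\<^sub>R (b - x)"
proof -
  let ?y = "x + t *\<^sub>R (b - x)"
  have "(norm (x - b))\<^sup>2 = (b - x) \<bullet> (b - x)"
    by (metis norm_minus_commute power2_norm_eq_inner)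
  then have "?y \<bullet> (b - x) = x \<bullet> (b - x) + t * (norm (x - b))\<^sup>2"
    by (simp add: inner_add_left)
  also have "t * (norm (x - b))\<^sup>2 = x \<bullet> (x - b)"
    using assms(1) by (simp add: t_def)
  finally have orth: "?y \<bullet> (b - x) = 0"
    by (simp add: inner_diff_right)
  have y: "?y \<in> affine hull {x, b}"
    unfolding affine_hull_2 by (rule CollectI, rule exI[of _ "1 - t"], rule exI[of _ t])
      (simp add: algebra_simps)
  show ?thesis
    unfolding proj_origin_def
  proof (rule closest_point_unique[OF convex_affine_hull closed_affine_hull y, symmetric], intro ballI)
    fix z assume "z \<in> affine hull {x, b}"
    then obtain u v where "u + v = 1" "z = u *\<^sub>R x + v *\<^sub>R b"
      unfolding affine_hull_2 by blast
    then have "z = (1 - v) *\<^sub>R x + v *\<^sub>R b"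
      by (simp add: eq_diff_eq)
    then have "z = ?y + (v - t) *\<^sub>R (b - x)"
      by (simp add: algebra_simps)
    then have "(norm z)\<^sup>2 = (norm ?y)\<^sup>2 + (norm ((v - t) *\<^sub>R (b - x)))\<^sup>2"
      using orth by (simp add: norm_add_Pythagorean orthogonal_def)
    then have "(norm ?y)\<^sup>2 \<le> (norm z)\<^sup>2"
      by simp
    then have "norm ?y \<le> norm z"
      by (rule power2_le_imp_le) simp
    then show "dist 0 ?y \<le> dist 0 z" by simp
  qed
qed

lemma proj_origin_pair_in_segment:
  fixes x b :: "'a::euclidean_space"
  assumes "x \<noteq> b" "x \<bullet> b \<le> x \<bullet> x" "x \<bullet> b \<le> b \<bullet> b"
  shows "proj_origin {x, b} \<in> closed_segment x b"
proof -
  define t where "t = (x \<bullet> (x - b)) / (norm (x - b))\<^sup>2"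
  have N: "(norm (x - b))\<^sup>2 = x \<bullet> x - 2 * (x \<bullet> b) + b \<bullet> b"
    by (simp add: power2_norm_eq_inner algebra_simps inner_commute)
  have "0 < (norm (x - b))\<^sup>2" using assms(1) by simp
  then have "0 \<le> t" "t \<le> 1"
    using assms(2,3) unfolding t_def N by (simp_all add: inner_diff_right)
  moreover have "proj_origin {x, b} = (1 - t) *\<^sub>R x + t *\<^sub>R b"
    using proj_origin_pair[OF assms(1)] by (simp add: t_def algebra_simps)
  ultimately show ?thesis
    unfolding in_segment by blast
qed

lemma norm_proj_origin_pair:
  fixes x b :: "'a::euclidean_space"
  assumes "x \<noteq> b"
  shows "(norm (proj_origin {x, b}))\<^sup>2 = (norm x)\<^sup>2 - (x \<bullet> (x - b))\<^sup>2 / (norm (x - b))\<^sup>2"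
proof -
  let ?p = "proj_origin {x, b}"
  have "(norm ?p)\<^sup>2 = x \<bullet> ?p"
    using inner_proj_origin[of x "{x, b}"] by (simp add: hull_inc power2_norm_eq_inner)
  also have "\<dots> = x \<bullet> x + (x \<bullet> (x - b)) / (norm (x - b))\<^sup>2 * (x \<bullet> (b - x))"
    unfolding proj_origin_pair[OF assms] by (simp add: inner_add_right)
  also have "x \<bullet> (b - x) = - (x \<bullet> (x - b))"
    by (simp add: inner_diff_right)
  finally have "(norm ?p)\<^sup>2 = x \<bullet> x - (x \<bullet> (x - b))\<^sup>2 / (norm (x - b))\<^sup>2"
    by (simp add: power2_eq_square)
  then show ?thesis
    by (metis power2_norm_eq_inner)
qed

section \<open>Violations, segments and facets of simplices\<close>

lemma most_violated_infeasible:
  assumes "\<not> feasible_pt a n z" "most_violated a n z m"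
  shows "a m \<bullet> z < 0" "violation a n z = - (a m \<bullet> z)"
proof -
  have m: "m < n" "\<And>j. j < n \<Longrightarrow> a m \<bullet> z \<le> a j \<bullet> z"
    using assms(2) by (auto simp: most_violated_def)
  obtain i where "i < n" "a i \<bullet> z < 0"
    using assms(1) by (force simp: feasible_pt_def)
  then show neg: "a m \<bullet> z < 0"
    using m(2) by force
  have "Max ((\<lambda>i. - (a i \<bullet> z)) ` {..<n}) = - (a m \<bullet> z)"
    using m by (intro Max_eqI) auto
  then show "violation a n z = - (a m \<bullet> z)"
    using neg by (simp add: violation_def)
qed

lemma violation_normalized:
  assumes "x \<noteq> 0" "\<not> feasible_pt a n (x /\<^sub>R norm x)" "most_violated a n (x /\<^sub>R norm x) m"
  shows "a m \<bullet> x < 0" "violation a n (x /\<^sub>R norm x) = - (a m \<bullet> x) / norm x"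
proof -
  have "a m \<bullet> (x /\<^sub>R norm x) = (a m \<bullet> x) / norm x"
    by (simp add: divide_inverse_commute)
  then show "a m \<bullet> x < 0" "violation a n (x /\<^sub>R norm x) = - (a m \<bullet> x) / norm x"
    using most_violated_infeasible[OF assms(2,3)] assms(1) by (simp_all add: divide_less_0_iff)
qed

lemma closed_segment_norm_le:
  fixes p q z :: "'a::real_normed_vector"
  assumes "z \<in> closed_segment p q" "norm q \<le> norm p"
  shows "norm z \<le> norm p"
proof -
  have "closed_segment p q \<subseteq> cball 0 (norm p)"
    using assms(2) by (intro closed_segment_subset convex_cball) auto
  then show ?thesis
    using assms(1) by auto
qed

lemma closed_segment_meets_rel_frontier:
  fixes K :: "'a::euclidean_space set"
  assumes "bounded K" "closed K" "y \<in> K" "c \<in> affine hull K" "c \<notin> K"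
  obtains z where "z \<in> closed_segment y c" "z \<in> rel_frontier K"
proof (cases "y \<in> rel_interior K")
  case False
  then show ?thesis
    using that[of y] assms(2,3) by (simp add: rel_frontier_def)
next
  case True
  have "y + (c - y) \<in> affine hull K" "c - y \<noteq> 0"
    using assms(3-5) by auto
  then obtain d where d: "0 < d" "y + d *\<^sub>R (c - y) \<in> rel_frontier K"
      "\<And>e. \<lbrakk>0 \<le> e; e < d\<rbrakk> \<Longrightarrow> y + e *\<^sub>R (c - y) \<in> rel_interior K"
    using ray_to_rel_frontier[OF assms(1) True] by metis
  have "d \<le> 1"
  proof (rule ccontr)
    assume "\<not> d \<le> 1"
    then have "c \<in> rel_interior K"
      using d(3)[of 1] by simp
    then show False
      using assms(5) rel_interior_subset by blast
  qed
  then have "y + d *\<^sub>R (c - y) \<in> closed_segment y c"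
    using d(1) unfolding in_segment by (intro conjI exI[of _ d]) (auto simp: algebra_simps)
  then show ?thesis
    using that d(2) by blast
qed

lemma facet_of_simplex_opposite_vertex:
  fixes S :: "'a::euclidean_space set"
  assumes "\<not> affine_dependent S" "F facet_of convex hull S"
  obtains u where "u \<in> S" "u \<notin> F" "F = convex hull (S - {u})"
proof -
  obtain u where u: "u \<in> S" "F = convex hull (S - {u})"
    using assms facet_of_convex_hull_affine_independent by blast
  moreover have "u \<notin> affine hull (S - {u})"
    using assms(1) u(1) by (auto simp: affine_dependent_def)
  ultimately show ?thesis
    using that convex_hull_subset_affine_hull by blast
qed

lemma facet_of_simplex_eq_opposite:
  fixes S :: "'a::euclidean_space set"
  assumes "\<not> affine_dependent S" "F facet_of convex hull S" "v \<in> S" "v \<notin> F"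
  shows "F = convex hull (S - {v})"
proof -
  obtain u where u: "u \<in> S" "F = convex hull (S - {u})"
    using facet_of_simplex_opposite_vertex[OF assms(1,2)] by blast
  have "u = v"
    using u assms(3,4) hull_inc[of v "S - {u}"] by blast
  then show ?thesis
    using u by simp
qed

lemma simplex_segment_crosses_facet:
  fixes S :: "'a::euclidean_space set"
  assumes "finite S" "\<not> affine_dependent S" "y \<in> convex hull S" "c \<in> affine hull S"
    and "c \<notin> convex hull S"
  obtains z F u where "z \<in> closed_segment y c" "z \<in> rel_frontier (convex hull S)"
    "F facet_of convex hull S" "z \<in> F" "u \<in> S" "u \<notin> F" "F = convex hull (S - {u})"
proof -
  have "compact (convex hull S)"
    using assms(1) by (simp add: finite_imp_compact_convex_hull)
  then obtain z where z: "z \<in> closed_segment y c" "z \<in> rel_frontier (convex hull S)"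
    using closed_segment_meets_rel_frontier[of "convex hull S" y c] assms(3-5)
    by (metis affine_hull_convex_hull compact_imp_bounded compact_imp_closed)
  have "rel_frontier (convex hull S) = \<Union> {F. F facet_of convex hull S}"
    using assms(1) by (simp add: rel_frontier_of_polyhedron polyhedron_convex_hull)
  then obtain F where "F facet_of convex hull S" "z \<in> F"
    using z(2) by blast
  moreover obtain u where "u \<in> S" "u \<notin> F" "F = convex hull (S - {u})"
    using facet_of_simplex_opposite_vertex[OF assms(2) \<open>F facet_of convex hull S\<close>] by blast
  ultimately show ?thesis
    using that z by blast
qed

section \<open>The contraction factor\<close>

definition defect_bound :: "real \<Rightarrow> real \<Rightarrow> real" where
  "defect_bound d v = sqrt ((1 - v\<^sup>2) / (1 + d\<^sup>2 + 2 * d * v)) * d"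

lemma defect_bound_less:
  assumes "0 < d" "0 < v"
  shows "defect_bound d v < d"
proof -
  have "0 < d\<^sup>2 + 2 * d * v"
    using assms by (simp add: add_pos_pos)
  then have "1 - v\<^sup>2 < 1 + d\<^sup>2 + 2 * d * v"
    using zero_le_power2[of v] by linarith
  moreover have "0 < 1 + d\<^sup>2 + 2 * d * v"
    using assms by (simp add: add_pos_nonneg)
  ultimately have "sqrt ((1 - v\<^sup>2) / (1 + d\<^sup>2 + 2 * d * v)) < 1"
    by simp
  then show ?thesis
    using assms(1) by (simp add: defect_bound_def)
qed

lemma norm_proj_origin_pair_unit:
  fixes x b :: "'a::euclidean_space"
  assumes "norm b = 1" "x \<noteq> 0" "x \<noteq> b"
  shows "norm (proj_origin {x, b}) = defect_bound (norm x) (- (b \<bullet> x) / norm x)"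
proof -
  define d where "d = norm x"
  define v where "v = - (b \<bullet> x) / d"
  have "0 < d" using assms(2) by (simp add: d_def)
  then have dv: "d * v = - (x \<bullet> b)"
    by (simp add: v_def inner_commute)
  have xx: "x \<bullet> x = d\<^sup>2" and bb: "b \<bullet> b = 1"
    using assms(1) by (simp_all add: d_def power2_norm_eq_inner flip: norm_eq_1)
  have N: "(norm (x - b))\<^sup>2 = 1 + d\<^sup>2 + 2 * d * v"
    by (simp add: power2_norm_eq_inner inner_diff_left inner_diff_right inner_commute xx bb dv)
  have "(norm (proj_origin {x, b}))\<^sup>2 = d\<^sup>2 - (d\<^sup>2 + d * v)\<^sup>2 / (1 + d\<^sup>2 + 2 * d * v)"
    using norm_proj_origin_pair[OF assms(3)] by (simp add: N dv xx inner_diff_right flip: d_def)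
  also have "\<dots> = (1 - v\<^sup>2) / (1 + d\<^sup>2 + 2 * d * v) * d\<^sup>2"
  proof -
    have "0 < 1 + d\<^sup>2 + 2 * d * v"
      using assms(3) by (simp flip: N)
    then show ?thesis
      by (simp add: field_simps power2_eq_square)
  qed
  finally have sq: "(norm (proj_origin {x, b}))\<^sup>2 = (1 - v\<^sup>2) / (1 + d\<^sup>2 + 2 * d * v) * d\<^sup>2" .
  have "norm (proj_origin {x, b}) = sqrt ((norm (proj_origin {x, b}))\<^sup>2)"
    by simp
  also have "\<dots> = sqrt ((1 - v\<^sup>2) / (1 + d\<^sup>2 + 2 * d * v)) * d"
    using \<open>0 < d\<close> by (simp only: sq real_sqrt_mult real_sqrt_abs abs_of_pos)
  finally show ?thesis
    by (simp add: defect_bound_def d_def v_def)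
qed

section \<open>Invariants of the algorithm\<close>

definition step2_inv :: "(nat \<Rightarrow> 'a::euclidean_space) \<Rightarrow> nat \<Rightarrow> 'a \<Rightarrow> 'a set \<Rightarrow> bool" where
  "step2_inv a n x Q \<longleftrightarrow>
     Q \<noteq> {} \<and> Q \<subseteq> a ` {..<n} \<and> nearly_pos_spanning Q \<and> x = proj_origin Q \<and> x \<noteq> 0"

definition step4_inv ::
    "(nat \<Rightarrow> 'a::euclidean_space) \<Rightarrow> nat \<Rightarrow> 'a \<Rightarrow> 'a set \<Rightarrow> 'a set \<Rightarrow> 'a \<Rightarrow> 'a \<Rightarrow> bool" where
  "step4_inv a n x Q P am y \<longleftrightarrow>
     step2_inv a n x Q \<and> am \<in> a ` {..<n} \<and> am \<notin> Q \<and> P \<subseteq> Q \<and>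
     \<not> affine_dependent (insert am Q) \<and> \<not> pos_spanning (insert am Q) \<and>
     y \<in> convex hull (insert am P) \<and>
     norm y \<le> defect_bound (norm x) (violation a n (x /\<^sub>R norm x)) \<and>
     defect_bound (norm x) (violation a n (x /\<^sub>R norm x)) < norm x"

fun alg_inv :: "(nat \<Rightarrow> 'a::euclidean_space) \<Rightarrow> nat \<Rightarrow> 'a alg_state \<Rightarrow> bool" where
  "alg_inv a n (At2 x Q) = step2_inv a n x Q"
| "alg_inv a n (At4 x Q P am y) = step4_inv a n x Q P am y"
| "alg_inv a n (StopFeasible z) = (norm z = 1 \<and> (\<forall>i<n. 0 \<le> a i \<bullet> z))"
| "alg_inv a n (StopSpanning P) = (P \<subseteq> a ` {..<n} \<and> pos_spanning P)"

lemma alg_inv_init: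
  assumes "\<forall>i<n. norm (a i) = 1" "alg_init a n s"
  shows "alg_inv a n s"
proof -
  obtain j where j: "j < n" "s = At2 (a j) {a j}"
    using assms(2) by (auto simp: alg_init_def)
  have "proj_origin {a j} = a j"
    using proj_origin_in_affine_hull[of "{a j}"] by simp
  then show ?thesis
    using j assms(1) by (auto simp: step2_inv_def nearly_pos_spanning_def)
qed

lemma step4_inv_start:
  fixes a :: "nat \<Rightarrow> 'a::euclidean_space"
  assumes unit: "\<forall>i<n. norm (a i) = 1" and inv: "step2_inv a n x Q"
    and infeasible: "\<not> feasible_pt a n (x /\<^sub>R norm x)"
    and m: "most_violated a n (x /\<^sub>R norm x) m"
    and not_spanning: "\<not> pos_spanning (insert (a m) Q)"
  shows "step4_inv a n x Q Q (a m) (proj_origin {x, a m})"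
proof -
  have Q: "\<not> affine_dependent Q" "x = proj_origin Q" "x \<in> convex hull Q" "x \<noteq> 0"
    using inv by (auto simp: step2_inv_def nearly_pos_spanning_def)
  have am: "norm (a m) = 1" "a m \<in> a ` {..<n}"
    using m unit by (auto simp: most_violated_def)
  define v where "v = violation a n (x /\<^sub>R norm x)"
  note viol = violation_normalized[OF Q(4) infeasible m, folded v_def]
  have "0 < norm x"
    using Q(4) by simp
  then have "0 < v"
    unfolding viol(2) using viol(1) by (intro divide_pos_pos) simp_all
  have "a m \<notin> affine hull Q"
  proof
    assume "a m \<in> affine hull Q"
    then have "0 \<le> a m \<bullet> x"
      unfolding Q(2) by (rule inner_proj_origin_nonneg)
    then show False
      using viol(1) by simp
  qed
  then have fresh: "a m \<notin> Q" and indep: "\<not> affine_dependent (insert (a m) Q)"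
    by (meson hull_inc, rule affine_independent_insert[OF Q(1)])
  have "x \<bullet> a m < 0" "a m \<bullet> a m = 1"
    using viol(1) am(1) by (simp_all add: inner_commute norm_eq_1)
  then have "x \<noteq> a m" "x \<bullet> a m \<le> x \<bullet> x" "x \<bullet> a m \<le> a m \<bullet> a m"
    using inner_ge_zero[of x] by (force, linarith, linarith)
  then have "proj_origin {x, a m} \<in> closed_segment x (a m)"
    by (rule proj_origin_pair_in_segment)
  also have "closed_segment x (a m) \<subseteq> convex hull (insert (a m) Q)"
    using Q(3) hull_mono[of Q "insert (a m) Q"] by (intro closed_segment_subset) (auto intro: hull_inc)
  finally have "proj_origin {x, a m} \<in> convex hull (insert (a m) Q)" .
  moreover have "norm (proj_origin {x, a m}) = defect_bound (norm x) v"
    using norm_proj_origin_pair_unit[OF am(1) Q(4) \<open>x \<noteq> a m\<close>] by (simp add: viol(2))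
  moreover have "defect_bound (norm x) v < norm x"
    using \<open>0 < norm x\<close> \<open>0 < v\<close> by (rule defect_bound_less)
  ultimately show ?thesis
    using inv am(2) fresh indep not_spanning by (simp add: step4_inv_def v_def)
qed

lemma step4_inv_simplex:
  fixes a :: "nat \<Rightarrow> 'a::euclidean_space"
  assumes unit: "\<forall>i<n. norm (a i) = 1" and inv: "step4_inv a n x Q P am y"
  shows "finite P" "\<not> affine_dependent (insert am P)" "insert am P \<subseteq> a ` {..<n}"
    and "touching_center (insert am P) = proj_origin (insert am P)"
    and "norm (proj_origin (insert am P)) \<le> norm y"
proof -
  have Q: "finite Q" "P \<subseteq> Q" "Q \<subseteq> a ` {..<n}" "am \<in> a ` {..<n}"
      "\<not> affine_dependent (insert am Q)" "y \<in> convex hull (insert am P)"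
    using inv by (auto simp: step4_inv_def step2_inv_def nearly_pos_spanning_def)
  show "finite P"
    using Q(1,2) finite_subset by blast
  show "\<not> affine_dependent (insert am P)"
    using Q(2,5) affine_dependent_subset[of "insert am P" "insert am Q"] by blast
  show sub: "insert am P \<subseteq> a ` {..<n}"
    using Q(2-4) by blast
  then show "touching_center (insert am P) = proj_origin (insert am P)"
    using unit by (intro touching_center_eq_proj_origin[where r = 1]) auto
  show "norm (proj_origin (insert am P)) \<le> norm y"
    using Q(6) convex_hull_subset_affine_hull norm_proj_origin_le by blast
qed

lemma step2_inv_step5:
  fixes a :: "nat \<Rightarrow> 'a::euclidean_space"
  assumes unit: "\<forall>i<n. norm (a i) = 1" and inv: "step4_inv a n x Q P am y"
    and C: "proj_origin (insert am P) \<in> convex hull (insert am P)"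
  shows "step2_inv a n (proj_origin (insert am P)) (insert am P)"
proof -
  note S = step4_inv_simplex[OF unit inv]
  have Q: "finite Q" "P \<subseteq> Q" "\<not> affine_dependent (insert am Q)" "\<not> pos_spanning (insert am Q)"
    using inv by (auto simp: step4_inv_def step2_inv_def nearly_pos_spanning_def)
  have "proj_origin (insert am P) \<noteq> 0"
  proof
    assume "proj_origin (insert am P) = 0"
    moreover have "convex hull (insert am P) \<subseteq> convex hull (insert am Q)"
      using Q(2) by (intro hull_mono) blast
    ultimately have "0 \<in> convex hull (insert am Q)"
      using C by auto
    then show False
      using Q by (simp add: pos_spanning_def)
  qed
  then show ?thesis
    using S C by (simp add: step2_inv_def nearly_pos_spanning_def)
qed

lemma step4_inv_step6:
  fixes a :: "nat \<Rightarrow> 'a::euclidean_space"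
  assumes unit: "\<forall>i<n. norm (a i) = 1" and inv: "step4_inv a n x Q P am y"
    and y': "y' \<in> closed_segment y (proj_origin (insert am P))"
    and F: "F facet_of convex hull (insert am P)" "y' \<in> F"
    and aj: "aj \<in> P" "aj \<notin> F"
  shows "step4_inv a n x Q (P - {aj}) am y'"
proof -
  note S = step4_inv_simplex[OF unit inv]
  have "am \<notin> P" "P \<subseteq> Q" "norm y \<le> defect_bound (norm x) (violation a n (x /\<^sub>R norm x))"
    using inv by (auto simp: step4_inv_def)
  have "F = convex hull (insert am P - {aj})"
    using facet_of_simplex_eq_opposite[OF S(2) F(1)] aj by blast
  also have "insert am P - {aj} = insert am (P - {aj})"
    using \<open>am \<notin> P\<close> aj(1) by blast
  finally have "y' \<in> convex hull (insert am (P - {aj}))"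
    using F(2) by simp
  moreover have "norm y' \<le> norm y"
    using closed_segment_norm_le[OF y' S(5)] .
  ultimately show ?thesis
    using inv \<open>P \<subseteq> Q\<close> \<open>norm y \<le> _\<close> by (auto simp: step4_inv_def)
qed

lemma step4_inv_segment_avoids_base:
  fixes a :: "nat \<Rightarrow> 'a::euclidean_space"
  assumes unit: "\<forall>i<n. norm (a i) = 1" and inv: "step4_inv a n x Q P am y"
    and y': "y' \<in> closed_segment y (proj_origin (insert am P))"
  shows "y' \<notin> convex hull P"
proof
  assume "y' \<in> convex hull P"
  moreover have "convex hull P \<subseteq> affine hull Q"
    using inv convex_hull_subset_affine_hull hull_mono[of P Q]
    by (auto simp: step4_inv_def)
  ultimately have "norm (proj_origin Q) \<le> norm y'"
    by (intro norm_proj_origin_le) blast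
  moreover have "norm y' \<le> norm y"
    using closed_segment_norm_le[OF y' step4_inv_simplex(5)[OF unit inv]] .
  ultimately show False
    using inv by (auto simp: step4_inv_def step2_inv_def)
qed

lemma alg_inv_step:
  fixes a :: "nat \<Rightarrow> 'a::euclidean_space"
  assumes unit: "\<forall>i<n. norm (a i) = 1"
    and step: "alg_step a n s s'" and inv: "alg_inv a n s"
  shows "alg_inv a n s'"
  using step
proof cases
  case (step2_stop x Q)
  then show ?thesis
    using inv by (auto simp: step2_inv_def feasible_pt_def)
next
  case (step3_stop x m Q)
  then show ?thesis
    using inv by (auto simp: step2_inv_def most_violated_def)
next
  case (step3_continue x m Q y)
  then show ?thesis
    using inv step4_inv_start[OF unit] by (simp add: proj_origin_def)
next
  case (step5 P am C x Q y)
  then show ?thesis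
    using inv step2_inv_step5[OF unit] step4_inv_simplex(4)[OF unit] by auto
next
  case (step6 P am C y' y F aj x Q)
  then show ?thesis
    using inv step4_inv_step6[OF unit] step4_inv_simplex(4)[OF unit] by auto
qed

lemma alg_reachable_inv:
  fixes a :: "nat \<Rightarrow> 'a::euclidean_space"
  assumes unit: "\<forall>i<n. norm (a i) = 1" and "alg_reachable a n s"
  shows "alg_inv a n s"
proof -
  obtain s0 where init: "alg_init a n s0" and steps: "(alg_step a n)\<^sup>*\<^sup>* s0 s"
    using assms(2) by (auto simp: alg_reachable_def)
  from steps show ?thesis
    by (induction rule: rtranclp_induct) (auto intro: alg_inv_init[OF unit init] alg_inv_step[OF unit])
qed

section \<open>Progress and termination\<close>

lemma alg_step_At2_exists:
  assumes "0 < n"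
  shows "\<exists>s'. alg_step a n (At2 x Q) s'"
proof (cases "feasible_pt a n (x /\<^sub>R norm x)")
  case True
  then show ?thesis
    by (blast intro: alg_step.step2_stop)
next
  case infeasible: False
  let ?z = "x /\<^sub>R norm x"
  have "Min ((\<lambda>j. a j \<bullet> ?z) ` {..<n}) \<in> (\<lambda>j. a j \<bullet> ?z) ` {..<n}"
    using assms by (intro Min_in) auto
  then obtain m where "m \<in> {..<n}" "Min ((\<lambda>j. a j \<bullet> ?z) ` {..<n}) = a m \<bullet> ?z"
    by (rule imageE)
  then have "most_violated a n ?z m"
    by (simp add: most_violated_def)
  then show ?thesis
    using infeasible
    by (cases "pos_spanning (insert (a m) Q)") (blast intro: alg_step.step3_stop alg_step.step3_continue)+
qed

lemma alg_step_At4_exists: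
  fixes a :: "nat \<Rightarrow> 'a::euclidean_space"
  assumes unit: "\<forall>i<n. norm (a i) = 1" and inv: "step4_inv a n x Q P am y"
  shows "\<exists>s'. alg_step a n (At4 x Q P am y) s'"
proof -
  define S where "S = insert am P"
  let ?C = "proj_origin S"
  note S = step4_inv_simplex[OF unit inv, folded S_def]
  show ?thesis
  proof (cases "?C \<in> convex hull S")
    case True
    have "alg_step a n (At4 x Q P am y) (At2 ?C S)"
      using S True unfolding S_def by (intro alg_step.step5) simp_all
    then show ?thesis ..
  next
    case outside: False
    have "y \<in> convex hull S"
      using inv by (simp add: step4_inv_def S_def)
    moreover have "?C \<in> affine hull S"
      using proj_origin_in_affine_hull[of S] by (simp add: S_def)
    ultimately obtain y' F u where y': "y' \<in> closed_segment y ?C" "y' \<in> rel_frontier (convex hull S)"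
        and F: "F facet_of convex hull S" "y' \<in> F"
        and u: "u \<in> S" "u \<notin> F" "F = convex hull (S - {u})"
      using simplex_segment_crosses_facet[OF _ S(2) _ _ outside] S(1)
      by (metis S_def finite_insert)
    have "u \<noteq> am"
    proof
      assume "u = am"
      moreover have "am \<notin> P"
        using inv by (auto simp: step4_inv_def)
      ultimately have "y' \<in> convex hull P"
        using u(3) F(2) by (simp add: S_def)
      then show False
        using step4_inv_segment_avoids_base[OF unit inv y'(1)[unfolded S_def]] by blast
    qed
    then have "alg_step a n (At4 x Q P am y) (At4 x Q (P - {u}) am y')"
      using S u y' F outside by (intro alg_step.step6[OF _ _ refl]) (auto simp: S_def)
    then show ?thesis ..
  qed
qed

definition proj_norms :: "(nat \<Rightarrow> 'a::euclidean_space) \<Rightarrow> nat \<Rightarrow> real set" where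
  "proj_norms a n = (\<lambda>R. norm (proj_origin R)) ` Pow (a ` {..<n})"

definition norm_rank :: "(nat \<Rightarrow> 'a::euclidean_space) \<Rightarrow> nat \<Rightarrow> 'a \<Rightarrow> nat" where
  "norm_rank a n x = card {w \<in> proj_norms a n. w < norm x}"

lemma norm_rank_less:
  assumes "R \<subseteq> a ` {..<n}" "norm (proj_origin R) < norm x"
  shows "norm_rank a n (proj_origin R) < norm_rank a n x"
proof -
  have "{w \<in> proj_norms a n. w < norm (proj_origin R)} \<subset> {w \<in> proj_norms a n. w < norm x}"
    using assms by (auto simp: proj_norms_def)
  then show ?thesis
    unfolding norm_rank_def by (rule psubset_card_mono[rotated]) (simp add: proj_norms_def)
qed

text \<open>The factor \<open>n + 2\<close> makes the measure lexicographic: every current set has at most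
  \<open>n\<close> elements.\<close>
fun alg_measure :: "(nat \<Rightarrow> 'a::euclidean_space) \<Rightarrow> nat \<Rightarrow> 'a alg_state \<Rightarrow> nat" where
  "alg_measure a n (At2 x Q) = (n + 2) * norm_rank a n x + card Q + 1"
| "alg_measure a n (At4 x Q P am y) = (n + 2) * norm_rank a n x + card P"
| "alg_measure a n (StopFeasible z) = 0"
| "alg_measure a n (StopSpanning P) = 0"

lemma alg_measure_step5:
  fixes a :: "nat \<Rightarrow> 'a::euclidean_space"
  assumes unit: "\<forall>i<n. norm (a i) = 1" and inv: "step4_inv a n x Q P am y"
  shows "alg_measure a n (At2 (proj_origin (insert am P)) (insert am P))
      < alg_measure a n (At4 x Q P am y)"
proof -
  note S = step4_inv_simplex[OF unit inv]
  have "norm (proj_origin (insert am P)) < norm x"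
    using S(5) inv by (auto simp: step4_inv_def)
  then have "norm_rank a n (proj_origin (insert am P)) + 1 \<le> norm_rank a n x"
    using norm_rank_less[OF S(3)] by (simp add: Suc_le_eq)
  then have "(n + 2) * (norm_rank a n (proj_origin (insert am P)) + 1) \<le> (n + 2) * norm_rank a n x"
    by (rule mult_le_mono2)
  moreover have "card (insert am P) \<le> n"
    using card_mono[OF _ S(3)] card_image_le[of "{..<n}" a] by simp
  ultimately show ?thesis
    by (simp add: algebra_simps)
qed

lemma alg_measure_decreasing:
  fixes a :: "nat \<Rightarrow> 'a::euclidean_space"
  assumes unit: "\<forall>i<n. norm (a i) = 1"
    and step: "alg_step a n s s'" and inv: "alg_inv a n s"
  shows "alg_measure a n s' < alg_measure a n s"
  using step
proof cases
  case (step5 P am C x Q y)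
  then show ?thesis
    using inv alg_measure_step5[OF unit] step4_inv_simplex(4)[OF unit] by auto
next
  case (step6 P am C y' y F aj x Q)
  then show ?thesis
    using card_Diff1_less[of P aj] by simp
qed auto

lemma alg_terminates:
  fixes a :: "nat \<Rightarrow> 'a::euclidean_space"
  assumes unit: "\<forall>i<n. norm (a i) = 1"
  shows "\<not> (\<exists>f. alg_init a n (f 0) \<and> (\<forall>k. alg_step a n (f k) (f (Suc k))))"
proof
  assume "\<exists>f. alg_init a n (f 0) \<and> (\<forall>k. alg_step a n (f k) (f (Suc k)))"
  then obtain f where init: "alg_init a n (f 0)" and steps: "\<And>k. alg_step a n (f k) (f (Suc k))"
    by blast
  have "alg_inv a n (f k)" for k
    by (induction k) (auto intro: alg_inv_init[OF unit init] alg_inv_step[OF unit steps])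
  then have "\<forall>k. (f (Suc k), f k) \<in> Wellfounded.measure (alg_measure a n)"
    using alg_measure_decreasing[OF unit steps] by simp
  then show False
    using wf_iff_no_infinite_down_chain wf_measure by blast
qed

lemma defect_step5_le:
  fixes a :: "nat \<Rightarrow> 'a::euclidean_space"
  assumes unit: "\<forall>i<n. norm (a i) = 1" and inv: "step4_inv a n x Q P am y"
    and step: "alg_step a n (At4 x Q P am y) (At2 x' Q')"
  shows "defect Q' \<le> defect_bound (defect Q) (violation a n (x /\<^sub>R norm x))"
proof -
  have "Q' = insert am P"
    using step by cases auto
  then have "defect Q' \<le> norm y"
    using step4_inv_simplex(5)[OF unit inv] by (simp add: defect_def)
  moreover have "defect Q = norm x"
    using inv by (simp add: step4_inv_def step2_inv_def defect_def)
  ultimately show ?thesis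
    using inv by (simp add: step4_inv_def)
qed

theorem lemma2p10:
  fixes a :: "nat \<Rightarrow> 'a::euclidean_space" and n :: nat
  assumes "0 < n" and "\<forall>i<n. norm (a i) = 1"
  shows "\<not> (\<exists>f. alg_init a n (f 0) \<and> (\<forall>k. alg_step a n (f k) (f (Suc k))))
    \<and> (\<forall>s. alg_reachable a n s \<longrightarrow>
          (case s of
             StopFeasible z \<Rightarrow> norm z = 1 \<and> (\<forall>i<n. 0 \<le> a i \<bullet> z)
           | StopSpanning P \<Rightarrow> P \<subseteq> a ` {..<n} \<and> pos_spanning P
           | _ \<Rightarrow> (\<exists>s'. alg_step a n s s')))
    \<and> (\<forall>x Q P am y x' Q'. alg_reachable a n (At4 x Q P am y) \<and>
          alg_step a n (At4 x Q P am y) (At2 x' Q') \<longrightarrow>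
          defect Q' \<le> sqrt ((1 - (violation a n (x /\<^sub>R norm x))\<^sup>2) /
                  (1 + (defect Q)\<^sup>2 + 2 * defect Q * violation a n (x /\<^sub>R norm x))) * defect Q)"
proof (intro conjI allI impI)
  show "\<not> (\<exists>f. alg_init a n (f 0) \<and> (\<forall>k. alg_step a n (f k) (f (Suc k))))"
    by (rule alg_terminates[OF assms(2)])
next
  fix s
  assume "alg_reachable a n s"
  then have "alg_inv a n s"
    by (rule alg_reachable_inv[OF assms(2)])
  then show "case s of
             StopFeasible z \<Rightarrow> norm z = 1 \<and> (\<forall>i<n. 0 \<le> a i \<bullet> z)
           | StopSpanning P \<Rightarrow> P \<subseteq> a ` {..<n} \<and> pos_spanning P
           | _ \<Rightarrow> (\<exists>s'. alg_step a n s s')"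
    using alg_step_At2_exists[OF assms(1)] alg_step_At4_exists[OF assms(2)] by (cases s) auto
next
  fix x Q P am y x' Q'
  assume "alg_reachable a n (At4 x Q P am y) \<and> alg_step a n (At4 x Q P am y) (At2 x' Q')"
  then show "defect Q' \<le> sqrt ((1 - (violation a n (x /\<^sub>R norm x))\<^sup>2) /
      (1 + (defect Q)\<^sup>2 + 2 * defect Q * violation a n (x /\<^sub>R norm x))) * defect Q"
    using alg_reachable_inv[OF assms(2)] defect_step5_le[OF assms(2)]
    by (fastforce simp: defect_bound_def)
qed

end
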